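(* Let $C \subset \mathbb{R}^n$ be convex and closed with nonempty interior, and let $h\colon C\to\mathbb{R}$ be Legendre on $C$, continuous on $C$, and satisfy condition (B): for every sequence $(x_k)_{k\in\mathbb{N}} \subset \mathrm{int}\, C$ and every $y \in C$, if $x_k \to y$ then $D_h(y,x_k) \to 0$. Then the set of extreme points of $C$ is locally finite (every bounded subset of $\mathbb{R}^n$ contains only finitely many extreme points of $C$). In particular, if $C$ is bounded, then $C$ is a polytope.
   Context: A convex function $h \colon C \to \mathbb{R}$ on a convex set $C\subset\mathbb{R}^n$ with nonempty interior is called Legendre if (1) $h$ is continuously differentiable on $\mathrm{int}\, C$ and $\|\nabla h(x)\| \to +\infty$ whenever $x \in \mathrm{int}\, C$ approaches a point of the boundary of $C$; and (2) $h$ is strictly convex on $\mathrm{int}\, C$. The Bregman divergence is $D_h(y,x) = h(y) - h(x) - \langle \nabla h(x), y - x\rangle$ for $y \in C$, $x \in \mathrm{int}\, C$. A polytope is the convex hull of finitely many points. *)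

theory Defs
  imports "HOL-Analysis.Analysis"
begin

text \<open>Gradient of a real-valued function on a Euclidean space (meaningful where h is
  differentiable; the Frechet derivative is then the functional v |-> grad h x \<bullet> v).\<close>
definition grad :: "('a::euclidean_space \<Rightarrow> real) \<Rightarrow> 'a \<Rightarrow> 'a" where
  "grad h x = (SOME g. (h has_derivative (\<lambda>v. g \<bullet> v)) (at x))"

definition strictly_convex_on :: "'a::real_vector set \<Rightarrow> ('a \<Rightarrow> real) \<Rightarrow> bool" where
  "strictly_convex_on S f \<longleftrightarrow> convex S \<and>
     (\<forall>x\<in>S. \<forall>y\<in>S. x \<noteq> y \<longrightarrow> (\<forall>u. 0 < u \<and> u < 1 \<longrightarrow>
        f (u *\<^sub>R x + (1 - u) *\<^sub>R y) < u * f x + (1 - u) * f y))"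

definition legendre :: "'a::euclidean_space set \<Rightarrow> ('a \<Rightarrow> real) \<Rightarrow> bool" where
  "legendre C h \<longleftrightarrow>
     convex_on C h \<and>
     (\<forall>x\<in>interior C. h differentiable (at x)) \<and>
     continuous_on (interior C) (grad h) \<and>
     (\<forall>y\<in>frontier C. filterlim (\<lambda>x. norm (grad h x)) at_top (at y within interior C)) \<and>
     strictly_convex_on (interior C) h"

definition bregman :: "('a::euclidean_space \<Rightarrow> real) \<Rightarrow> 'a \<Rightarrow> 'a \<Rightarrow> real" where
  "bregman h y x = h y - h x - grad h x \<bullet> (y - x)"

end

theory Submission
  imports Defs
begin

(* Condition (B) keeps D_h(y, .) bounded on int C near y. At a boundary point b near y the
   gradients of h blow up, and a limit u of their directions is an outer normal of C at b;
   dividing D_h(y, x) <= 1 by |grad h x| in the limit gives u.b <= u.y, so the supporting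
   hyperplane at b passes through y. Near y the set C therefore behaves like a cone with apex y,
   which leaves no room for a second extreme point e: the segment from an interior point near y
   to 2e - y would leave C through a boundary point whose supporting hyperplane cuts it
   strictly. Hence extreme points cannot accumulate, and for bounded C the Krein-Milman theorem
   turns finitely many extreme points into a polytope. *)

lemma has_derivative_grad:
  fixes h :: "'a::euclidean_space \<Rightarrow> real"
  assumes "h differentiable (at x)"
  shows "(h has_derivative (\<lambda>v. grad h x \<bullet> v)) (at x)"
proof -
  obtain D where D: "(h has_derivative D) (at x)"
    using assms differentiable_def by blast
  have "D = (\<lambda>v. adjoint D 1 \<bullet> v)"
    using adjoint_works[OF has_derivative_linear[OF D]] by (auto simp: inner_commute)
  with D have "\<exists>g. (h has_derivative (\<lambda>v. g \<bullet> v)) (at x)" by metis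
  then show ?thesis
    unfolding grad_def by (rule someI_ex)
qed

lemma convex_on_has_derivative_above_tangent:
  fixes f :: "'a::real_normed_vector \<Rightarrow> real"
  assumes convex: "convex_on C f" and "x \<in> C" "z \<in> C"
    and deriv: "(f has_derivative D) (at x)"
  shows "D (z - x) \<le> f z - f x"
proof -
  define \<phi> where "\<phi> t = f (x + t *\<^sub>R (z - x))" for t
  have line: "((\<lambda>t. x + t *\<^sub>R (z - x)) has_derivative (\<lambda>t. t *\<^sub>R (z - x))) (at 0)"
    by (auto intro!: derivative_eq_intros)
  have "(\<phi> has_derivative (\<lambda>t. D (t *\<^sub>R (z - x)))) (at 0)"
    unfolding \<phi>_def using diff_chain_at[OF line] deriv by (simp add: o_def)
  then have "(\<phi> has_real_derivative D (z - x)) (at 0)"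
    using linear_scale[OF has_derivative_linear[OF deriv]]
    by (simp add: has_field_derivative_def mult.commute[of _ "D (z - x)"])
  then have "((\<lambda>t. (\<phi> t - \<phi> 0) / t) \<longlongrightarrow> D (z - x)) (at_right 0)"
    by (simp add: has_field_derivative_iff filterlim_at_split)
  moreover have "\<forall>\<^sub>F t in at_right 0. (\<phi> t - \<phi> 0) / t \<le> f z - f x"
    unfolding eventually_at_right_field
  proof (intro exI[of _ 1] conjI allI impI)
    fix t :: real assume t: "0 < t" "t < 1"
    have "x + t *\<^sub>R (z - x) = (1 - t) *\<^sub>R x + t *\<^sub>R z"
      by (simp add: algebra_simps)
    then have "\<phi> t \<le> (1 - t) * f x + t * f z"
      using convex_onD[OF convex, of t x z] t \<open>x \<in> C\<close> \<open>z \<in> C\<close> by (simp add: \<phi>_def)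
    then show "(\<phi> t - \<phi> 0) / t \<le> f z - f x"
      using t by (simp add: \<phi>_def divide_simps algebra_simps)
  qed simp
  ultimately show ?thesis
    using tendsto_upperbound trivial_limit_at_right_real by blast
qed

lemma tendsto_nonpos_if_le_divide_at_top:
  fixes a c N :: "'b \<Rightarrow> real"
  assumes "(a \<longlongrightarrow> l) F" "(c \<longlongrightarrow> m) F" "filterlim N at_top F" "F \<noteq> bot"
    and "\<forall>\<^sub>F x in F. a x \<le> c x / N x"
  shows "l \<le> 0"
  using assms
  by (intro tendsto_le[OF _ tendsto_divide_0 assms(1)] filterlim_at_top_imp_at_infinity)

lemma inner_sgn_left: "sgn g \<bullet> v = (g \<bullet> v) / norm g"
  by (simp add: sgn_div_norm divide_inverse_commute)

lemma sgn_gradient_limit_normal: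
  fixes C :: "'a::euclidean_space set" and X :: "nat \<Rightarrow> 'a"
  assumes convex: "convex_on C h" and cont: "continuous_on C h"
    and diff: "\<forall>x\<in>interior C. h differentiable (at x)"
    and X: "\<forall>n. X n \<in> interior C" "X \<longlonglongrightarrow> b" "b \<in> C"
    and blowup: "filterlim (\<lambda>n. norm (grad h (X n))) at_top sequentially"
    and u: "(\<lambda>n. sgn (grad h (X n))) \<longlonglongrightarrow> u"
  shows "z \<in> C \<Longrightarrow> u \<bullet> z \<le> u \<bullet> b"
    and "\<forall>\<^sub>F n in sequentially. bregman h y (X n) \<le> M \<Longrightarrow> u \<bullet> b \<le> u \<bullet> y"
proof -
  have hX: "(\<lambda>n. h (X n)) \<longlonglongrightarrow> h b"
    using continuous_on_tendsto_compose[OF cont X(2,3) always_eventually] X(1) interior_subset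
    by blast
  \<comment> \<open>holds even for a vanishing gradient: both sides are then 0, as sgn 0 = 0 and c / 0 = 0\<close>
  have scaled: "sgn (grad h (X n)) \<bullet> v \<le> c / norm (grad h (X n))"
    if "grad h (X n) \<bullet> v \<le> c" for n v c
    using that by (simp add: inner_sgn_left divide_right_mono)
  show "u \<bullet> z \<le> u \<bullet> b" if "z \<in> C"
  proof -
    have "grad h (X n) \<bullet> (z - X n) \<le> h z - h (X n)" for n
      using convex_on_has_derivative_above_tangent[OF convex _ that has_derivative_grad]
        X(1) diff interior_subset by blast
    then have "\<forall>\<^sub>F n in sequentially.
        sgn (grad h (X n)) \<bullet> (z - X n) \<le> (h z - h (X n)) / norm (grad h (X n))"
      by (intro always_eventually allI scaled)
    moreover have "(\<lambda>n. sgn (grad h (X n)) \<bullet> (z - X n)) \<longlonglongrightarrow> u \<bullet> (z - b)"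
      by (intro tendsto_inner u tendsto_diff tendsto_const X(2))
    ultimately have "u \<bullet> (z - b) \<le> 0"
      using tendsto_nonpos_if_le_divide_at_top[OF _ tendsto_diff[OF tendsto_const hX] blowup]
      by simp
    then show ?thesis by (simp add: inner_diff_right)
  qed
  show "u \<bullet> b \<le> u \<bullet> y" if "\<forall>\<^sub>F n in sequentially. bregman h y (X n) \<le> M"
  proof -
    from that have "\<forall>\<^sub>F n in sequentially.
        sgn (grad h (X n)) \<bullet> (X n - y) \<le> ((M - h y) + h (X n)) / norm (grad h (X n))"
    proof eventually_elim
      case (elim n)
      then have "grad h (X n) \<bullet> (X n - y) \<le> (M - h y) + h (X n)"
        by (simp add: bregman_def inner_diff_left inner_diff_right)
      then show ?case by (rule scaled)
    qed
    moreover have "(\<lambda>n. sgn (grad h (X n)) \<bullet> (X n - y)) \<longlonglongrightarrow> u \<bullet> (b - y)"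
      by (intro tendsto_inner u tendsto_diff tendsto_const X(2))
    ultimately have "u \<bullet> (b - y) \<le> 0"
      using tendsto_nonpos_if_le_divide_at_top[OF _ tendsto_add[OF tendsto_const hX] blowup]
      by simp
    then show ?thesis by (simp add: inner_diff_right)
  qed
qed

lemma supporting_normal_at_frontier:
  fixes C :: "'a::euclidean_space set" and h :: "'a \<Rightarrow> real"
  assumes "convex C" "closed C" "interior C \<noteq> {}" "legendre C h" "continuous_on C h"
    and bregman_le: "\<forall>x\<in>interior C. dist x y < \<delta> \<longrightarrow> bregman h y x \<le> M"
    and b: "b \<in> frontier C" "dist b y < \<delta>"
  obtains u where "u \<noteq> 0" "\<forall>z\<in>C. u \<bullet> z \<le> u \<bullet> b" "u \<bullet> b \<le> u \<bullet> y"
proof -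
  have "b \<in> C"
    using b(1) frontier_subset_closed[OF \<open>closed C\<close>] by blast
  then have "b \<in> closure (interior C)"
    using convex_closure_interior[OF \<open>convex C\<close> \<open>interior C \<noteq> {}\<close>] \<open>closed C\<close> by simp
  then obtain X where X: "\<forall>n. X n \<in> interior C" "X \<longlonglongrightarrow> b"
    using closure_sequential by blast
  have "filterlim X (at b within interior C) sequentially"
    using X b(1) by (auto simp: filterlim_at frontier_def intro!: always_eventually)
  moreover have "filterlim (\<lambda>x. norm (grad h x)) at_top (at b within interior C)"
    using \<open>legendre C h\<close> b(1) unfolding legendre_def by blast
  ultimately have blowup: "filterlim (\<lambda>n. norm (grad h (X n))) at_top sequentially"
    by (rule filterlim_compose[rotated])
  have "\<forall>n. sgn (grad h (X n)) \<in> cball 0 1"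
    by (simp add: norm_sgn)
  then obtain u r where r: "strict_mono r" and u: "((\<lambda>n. sgn (grad h (X n))) \<circ> r) \<longlonglongrightarrow> u"
    using seq_compactE[OF compact_imp_seq_compact[OF compact_cball]] by metis
  define Y where "Y = X \<circ> r"
  have Y: "\<forall>n. Y n \<in> interior C" "Y \<longlonglongrightarrow> b"
    using X LIMSEQ_subseq_LIMSEQ[OF X(2) r] by (auto simp: Y_def)
  have blowup_Y: "filterlim (\<lambda>n. norm (grad h (Y n))) at_top sequentially"
    using filterlim_compose[OF blowup filterlim_subseq[OF r]] by (simp add: Y_def o_def)
  have u_Y: "(\<lambda>n. sgn (grad h (Y n))) \<longlonglongrightarrow> u"
    using u by (simp add: Y_def o_def)
  have "u \<noteq> 0"
  proof
    assume "u = 0"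
    then have "\<forall>\<^sub>F n in sequentially. norm (sgn (grad h (Y n))) < 1"
      using order_tendstoD(2)[OF tendsto_norm[OF u_Y]] by simp
    moreover have "\<forall>\<^sub>F n in sequentially. 0 < norm (grad h (Y n))"
      using blowup_Y unfolding filterlim_at_top_dense by blast
    ultimately have "\<forall>\<^sub>F n in sequentially. False"
      by eventually_elim (simp add: norm_sgn)
    then show False by simp
  qed
  have "\<forall>\<^sub>F n in sequentially. dist (Y n) y < \<delta>"
    using order_tendstoD(2)[OF tendsto_dist[OF Y(2) tendsto_const] b(2)] .
  then have "\<forall>\<^sub>F n in sequentially. bregman h y (Y n) \<le> M"
    using bregman_le Y(1) by (auto elim: eventually_mono)
  moreover have "convex_on C h" "\<forall>x\<in>interior C. h differentiable (at x)"
    using \<open>legendre C h\<close> unfolding legendre_def by auto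
  ultimately show ?thesis
    using sgn_gradient_limit_normal[OF _ \<open>continuous_on C h\<close> _ Y \<open>b \<in> C\<close> blowup_Y u_Y]
      \<open>u \<noteq> 0\<close> that by blast
qed

lemma bregman_locally_bounded:
  fixes h :: "'a::euclidean_space \<Rightarrow> real"
  assumes to_zero: "\<And>xs. \<forall>k. xs k \<in> S \<Longrightarrow> xs \<longlonglongrightarrow> y \<Longrightarrow> (\<lambda>k. bregman h y (xs k)) \<longlonglongrightarrow> 0"
    and "0 < M"
  obtains \<delta> where "\<delta> > 0" "\<forall>x\<in>S. dist x y < \<delta> \<longrightarrow> bregman h y x \<le> M"
proof -
  have "\<forall>\<^sub>F x in at y within S. bregman h y x < M"
    using to_zero order_tendstoD(2)[OF _ \<open>0 < M\<close>]
    by (intro sequentially_imp_eventually_within) blast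
  then obtain \<delta> where "\<delta> > 0" "\<forall>x\<in>S. x \<noteq> y \<and> dist x y < \<delta> \<longrightarrow> bregman h y x < M"
    unfolding eventually_at by blast
  moreover have "bregman h y y = 0"
    by (simp add: bregman_def)
  ultimately show ?thesis
    using that \<open>0 < M\<close> by (metis less_imp_le)
qed

lemma not_islimpt_extreme_points_if_supported_through:
  fixes C :: "'a::euclidean_space set"
  assumes "convex C" "closed C" "interior C \<noteq> {}" "y \<in> C" "\<delta> > 0"
    and supported: "\<And>b. b \<in> frontier C \<Longrightarrow> dist b y < \<delta> \<Longrightarrow>
      \<exists>u. u \<noteq> 0 \<and> (\<forall>z\<in>C. u \<bullet> z \<le> u \<bullet> b) \<and> u \<bullet> b \<le> u \<bullet> y"
  shows "\<not> y islimpt {e. e extreme_point_of C}"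
proof
  assume "y islimpt {e. e extreme_point_of C}"
  then obtain e where e: "e extreme_point_of C" "e \<noteq> y" "dist e y < \<delta> / 2"
    using \<open>\<delta> > 0\<close> unfolding islimpt_approachable by (metis half_gt_zero mem_Collect_eq)
  define q where "q = 2 *\<^sub>R e - y"
  have "e \<in> C"
    using e(1) extreme_point_of_def by blast
  have "midpoint y q = e"
    unfolding midpoint_eq_iff q_def by (simp add: scaleR_2)
  then have "e \<in> open_segment y q"
    using e(2) by (metis midpoint_idem midpoint_in_open_segment)
  then have "q \<notin> C"
    using e(1) \<open>y \<in> C\<close> unfolding extreme_point_of_def by blast
  have "dist q y = 2 * dist e y"
  proof -
    have "q - y = 2 *\<^sub>R (e - y)"
      by (simp add: q_def scaleR_diff_right scaleR_2)
    then show ?thesis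
      by (simp add: dist_norm)
  qed
  then have "dist q y < \<delta>"
    using e(3) by simp
  have "y \<in> closure (interior C)"
    using convex_closure_interior[OF \<open>convex C\<close> \<open>interior C \<noteq> {}\<close>] \<open>closed C\<close> \<open>y \<in> C\<close> by simp
  then obtain c where c: "c \<in> interior C" "dist c y < \<delta>"
    using closure_approachable \<open>\<delta> > 0\<close> by blast
  have "c \<in> C"
    using c(1) interior_subset by blast
  then have "closed_segment c q \<inter> frontier C \<noteq> {}"
    using \<open>q \<notin> C\<close> by (intro connected_Int_frontier connected_segment) blast+
  then obtain b where b: "b \<in> closed_segment c q" "b \<in> frontier C"
    by blast
  have "closed_segment c q \<subseteq> ball y \<delta>"
    using c(2) \<open>dist q y < \<delta>\<close> by (intro closed_segment_subset) (auto simp: dist_commute)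
  with b(1) have "dist b y < \<delta>"
    by (auto simp: dist_commute)
  then obtain u where u: "u \<noteq> 0" "\<forall>z\<in>C. u \<bullet> z \<le> u \<bullet> b" "u \<bullet> b \<le> u \<bullet> y"
    using supported[OF b(2)] by blast
  have "C \<subseteq> {z. u \<bullet> z \<le> u \<bullet> b}"
    using u(2) by blast
  then have "c \<in> interior {z. u \<bullet> z \<le> u \<bullet> b}"
    using c(1) interior_mono by blast
  then have uc: "u \<bullet> c < u \<bullet> b"
    using u(1) by simp
  have "u \<bullet> e \<le> u \<bullet> b"
    using u(2) \<open>e \<in> C\<close> by blast
  then have uq: "u \<bullet> q \<le> u \<bullet> b"
    using u(3) by (simp add: q_def inner_diff_right)
  obtain \<mu> where \<mu>: "0 \<le> \<mu>" "\<mu> \<le> 1" "b = (1 - \<mu>) *\<^sub>R c + \<mu> *\<^sub>R q"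
    using b(1) unfolding in_segment by blast
  have "b \<in> C"
    using b(2) frontier_subset_closed[OF \<open>closed C\<close>] by blast
  then have "\<mu> \<noteq> 1"
    using \<mu>(3) \<open>q \<notin> C\<close> by auto
  have "u \<bullet> b = (1 - \<mu>) * (u \<bullet> c) + \<mu> * (u \<bullet> q)"
    using \<mu>(3) by (simp add: inner_add_right)
  also have "\<dots> < (1 - \<mu>) * (u \<bullet> b) + \<mu> * (u \<bullet> b)"
    using \<mu>(2) \<open>\<mu> \<noteq> 1\<close> uc mult_left_mono[OF uq \<mu>(1)] by (intro add_less_le_mono) auto
  finally show False
    by (simp add: algebra_simps)
qed

lemma legendre_not_islimpt_extreme_points:
  fixes C :: "'a::euclidean_space set" and h :: "'a \<Rightarrow> real"
  assumes "convex C" "closed C" "interior C \<noteq> {}" "legendre C h" "continuous_on C h"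
    and condB: "\<And>xs. \<forall>k. xs k \<in> interior C \<Longrightarrow> xs \<longlonglongrightarrow> y
                  \<Longrightarrow> (\<lambda>k. bregman h y (xs k)) \<longlonglongrightarrow> 0"
    and "y \<in> C"
  shows "\<not> y islimpt {x. x extreme_point_of C}"
proof -
  obtain \<delta> where "\<delta> > 0" "\<forall>x\<in>interior C. dist x y < \<delta> \<longrightarrow> bregman h y x \<le> 1"
    using bregman_locally_bounded[OF condB zero_less_one] by blast
  then show ?thesis
    using not_islimpt_extreme_points_if_supported_through[OF assms(1-3) \<open>y \<in> C\<close>]
      supporting_normal_at_frontier[OF assms(1-5)] by metis
qed

theorem proposition1:
  fixes C :: "'a::euclidean_space set" and h :: "'a \<Rightarrow> real"
  assumes "convex C" and "closed C" and "interior C \<noteq> {}"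
    and "legendre C h"
    and "continuous_on C h"
    and condB: "\<And>xs y. (\<forall>k. xs k \<in> interior C) \<Longrightarrow> y \<in> C \<Longrightarrow> xs \<longlonglongrightarrow> y
                  \<Longrightarrow> (\<lambda>k. bregman h y (xs k)) \<longlonglongrightarrow> 0"
  shows "(\<forall>B. bounded B \<longrightarrow> finite {x \<in> B. x extreme_point_of C})
         \<and> (bounded C \<longrightarrow> polytope C)"
proof -
  let ?E = "{x. x extreme_point_of C}"
  have "?E \<subseteq> C"
    using extreme_point_of_def by blast
  then have no_limit: "\<not> y islimpt ?E" for y
    using legendre_not_islimpt_extreme_points[OF assms(1-5) condB] \<open>closed C\<close>
    by (meson closed_limpt islimpt_subset)
  have finite: "finite {x \<in> B. x extreme_point_of C}" if "bounded B" for B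
    using finite_not_islimpt_in_compact[OF compact_closure[THEN iffD2, OF that] no_limit]
    by (rule finite_subset[rotated]) (auto intro: closure_subset[THEN subsetD])
  have "polytope C" if "bounded C"
  proof -
    have "finite ?E"
      using finite[OF that] \<open>?E \<subseteq> C\<close> by (simp add: Collect_conj_eq inf.absorb2)
    moreover have "C = convex hull ?E"
      using Krein_Milman_Minkowski \<open>closed C\<close> \<open>convex C\<close> that compact_eq_bounded_closed by blast
    ultimately show ?thesis
      unfolding polytope_def by blast
  qed
  with finite show ?thesis
    by blast
qed

end
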